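(* In the setting of the context (with assumptions (A.1)–(A.3)), suppose the PMM generates infinite sequences $\{(u_k,v_k)\}$, $\{(z_k,w_k)\}$, $\{\gamma_k\}$, $\{\rho_k\}$; define $x_k=z_{k-1}+\lambda w_{k-1}+\lambda(Cv_k-d)$, $y_k=x_k-\lambda(w_{k-1}-Mu_k)$, and for $k\ge1$ $$\Gamma_k=\sum_{j=1}^k\rho_j\gamma_j,\quad \bar u_k=\frac1{\Gamma_k}\sum_{j=1}^k\rho_j\gamma_ju_j,\quad \bar v_k=\frac1{\Gamma_k}\sum_{j=1}^k\rho_j\gamma_jv_j,$$ $$\bar\epsilon_k^u=\frac1{\Gamma_k}\sum_{j=1}^k\rho_j\gamma_j\langle u_j-\bar u_k,-M^*y_j\rangle,\qquad \bar\epsilon_k^v=\frac1{\Gamma_k}\sum_{j=1}^k\rho_j\gamma_j\langle v_j-\bar v_k,-C^*x_j\rangle.$$ Let $d_0$ be the distance from $(z_0,w_0)$ to $S_e(\partial h_1,\partial h_2)$. Then for every integer $k\ge1$, $$\bar\epsilon_k^u+\bar\epsilon_k^v\le\frac1{\Gamma_k}\left[\frac1{\Gamma_k}\sum_{j=1}^k\rho_j\gamma_j\left(\lambda^2\|Mu_j+Cv_j-d\|^2+\|d-Cv_j-w_{j-1}\|^2\right)+4d_0^2\right].$$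
   Context: Let $f:\mathbb{R}^{m_1}\to(-\infty,\infty]$, $g:\mathbb{R}^{m_2}\to(-\infty,\infty]$ be proper closed convex, $M:\mathbb{R}^{m_1}\to\mathbb{R}^n$, $C:\mathbb{R}^{m_2}\to\mathbb{R}^n$ linear, $d\in\mathbb{R}^n$; consider $\min\{f(u)+g(v):Mu+Cv=d\}$ with Lagrangian $L(u,v,z)=f(u)+g(v)+\langle Mu+Cv-d,z\rangle$. A saddle point is $(u^*,v^*,z^* )$ with $L(u^*,v^*,z^* )$ finite and $\min_{(u,v)}L(u,v,z^* )=L(u^*,v^*,z^* )=\max_zL(u^*,v^*,z)$. Let $h_1(z)=f^*(-M^*z)$, $h_2(z)=g^*(-C^*z)+\langle d,z\rangle$ ($^*$ on functions = Fenchel conjugate, on operators = adjoint), and $S_e(\partial h_1,\partial h_2)=\{(z,w)\in\mathbb{R}^n\times\mathbb{R}^n:-w\in\partial h_1(z),\ w\in\partial h_2(z)\}$ (a closed convex set). Standing assumptions: (A.1) $L$ has a saddle point; (A.2) $\mathrm{ri}(\mathrm{dom} f^* )\cap\mathrm{range}(M^* )\ne\emptyset$; (A.3) $\mathrm{ri}(\mathrm{dom} g^* )\cap\mathrm{range}(C^* )\ne\emptyset$. PMM: given $(z_0,w_0)\in\mathbb{R}^n\times\mathbb{R}^n$, $\lambda>0$, $\bar\rho\in[0,1)$, for $k=1,2,\dots$: (1) let $v_k$ be a minimizer of $g(v)+\langle z_{k-1}+\lambda w_{k-1},Cv-d\rangle+\frac\lambda2\|Cv-d\|^2$ and $u_k$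 a minimizer of $f(u)+\langle z_{k-1}+\lambda(Cv_k-d),Mu\rangle+\frac\lambda2\|Mu\|^2$; (2) if $\|Mu_k+Cv_k-d\|+\|Mu_k-w_{k-1}\|=0$ stop; otherwise set $\gamma_k=\dfrac{\lambda\|Cv_k-d+w_{k-1}\|^2+\lambda\langle d-Cv_k-Mu_k,w_{k-1}-Mu_k\rangle}{\|Mu_k+Cv_k-d\|^2+\lambda^2\|Mu_k-w_{k-1}\|^2}$; (3) choose $\rho_k\in[1-\bar\rho,1+\bar\rho]$ and set $z_k=z_{k-1}+\rho_k\gamma_k(Mu_k+Cv_k-d)$, $w_k=w_{k-1}-\rho_k\gamma_k\lambda(w_{k-1}-Mu_k)$. *)

theory Defs
  imports "HOL-Analysis.Analysis"
begin

text \<open>Extended-real-valued functions on a Euclidean space: f x = \<infinity> means x is outside dom f.\<close>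

definition proper_fun :: "('a \<Rightarrow> ereal) \<Rightarrow> bool" where
  "proper_fun f \<longleftrightarrow> (\<exists>x. f x < \<infinity>) \<and> (\<forall>x. f x > -\<infinity>)"

definition epigraph_e :: "('a \<Rightarrow> ereal) \<Rightarrow> ('a \<times> real) set" where
  "epigraph_e f = {(x, t). f x \<le> ereal t}"

definition closed_fun :: "('a::topological_space \<Rightarrow> ereal) \<Rightarrow> bool" where
  "closed_fun f \<longleftrightarrow> closed (epigraph_e f)"

definition convex_fun :: "('a::real_vector \<Rightarrow> ereal) \<Rightarrow> bool" where
  "convex_fun f \<longleftrightarrow> convex (epigraph_e f)"

definition effdom :: "('a \<Rightarrow> ereal) \<Rightarrow> 'a set" where
  "effdom f = {x. f x < \<infinity>}"

definition fconj :: "('a::real_inner \<Rightarrow> ereal) \<Rightarrow> 'a \<Rightarrow> ereal" where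
  "fconj f y = (SUP x. ereal (x \<bullet> y) - f x)"

definition subdiff :: "('a::real_inner \<Rightarrow> ereal) \<Rightarrow> 'a \<Rightarrow> 'a set" where
  "subdiff h z = {w. \<bar>h z\<bar> \<noteq> \<infinity> \<and> (\<forall>z'. h z + ereal (w \<bullet> (z' - z)) \<le> h z')}"

definition Se :: "('a::real_inner \<Rightarrow> ereal) \<Rightarrow> ('a \<Rightarrow> ereal) \<Rightarrow> ('a \<times> 'a) set" where
  "Se h1 h2 = {(z, w). -w \<in> subdiff h1 z \<and> w \<in> subdiff h2 z}"

definition lagr :: "('a \<Rightarrow> ereal) \<Rightarrow> ('b \<Rightarrow> ereal) \<Rightarrow> ('a \<Rightarrow> 'c) \<Rightarrow> ('b \<Rightarrow> 'c) \<Rightarrow> 'c::real_inner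
   \<Rightarrow> 'a \<Rightarrow> 'b \<Rightarrow> 'c \<Rightarrow> ereal" where
  "lagr f g M C d u v z = f u + g v + ereal ((M u + C v - d) \<bullet> z)"

definition is_saddle ::  "('a \<Rightarrow> ereal) \<Rightarrow> ('b \<Rightarrow> ereal) \<Rightarrow> ('a \<Rightarrow> 'c) \<Rightarrow> ('b \<Rightarrow> 'c) \<Rightarrow> 'c::real_inner
   \<Rightarrow> 'a \<Rightarrow> 'b \<Rightarrow> 'c \<Rightarrow> bool" where
  "is_saddle f g M C d us vs zs \<longleftrightarrow>
     \<bar>lagr f g M C d us vs zs\<bar> \<noteq> \<infinity> \<and>
     (\<forall>u v. lagr f g M C d us vs zs \<le> lagr f g M C d u v zs) \<and>
     (\<forall>z. lagr f g M C d us vs z \<le> lagr f g M C d us vs zs)"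

end

theory Submission
  imports Defs
begin

text \<open>
  The PMM step is a relaxed projective-splitting step. The optimality conditions of the two
  subproblems give \<open>-M u\<^sub>k \<in> \<partial>h\<^sub>1(y\<^sub>k)\<close> and \<open>d - C v\<^sub>k \<in> \<partial>h\<^sub>2(x\<^sub>k)\<close>, so by monotonicity of
  subdifferentials the affine function
  \<open>\<phi>\<^sub>k(z, w) = \<langle>x\<^sub>k - z, d - C v\<^sub>k - w\<rangle> + \<langle>y\<^sub>k - z, w - M u\<^sub>k\<rangle>\<close>
  is nonnegative on \<open>S\<^sub>e\<close>, and \<open>(z\<^sub>k, w\<^sub>k)\<close> is obtained from \<open>(z\<^sub>k\<^sub>-\<^sub>1, w\<^sub>k\<^sub>-\<^sub>1)\<close> by a relaxed projection,
  with step \<open>\<rho>\<^sub>k\<gamma>\<^sub>k\<close>, onto the half-space \<open>\<phi>\<^sub>k \<ge> 0\<close>. Hence the iterates are Fejer monotone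
  with respect to \<open>S\<^sub>e\<close>, and \<open>2 \<Sum> \<rho>\<^sub>j\<gamma>\<^sub>j \<phi>\<^sub>j(p) \<le> \<parallel>(z\<^sub>0, w\<^sub>0) - p\<parallel>\<^sup>2\<close> for every \<open>p\<close>.
  Bilinearity turns the ergodic sum \<open>\<epsilon>\<^sup>u + \<epsilon>\<^sup>v\<close> into \<open>\<Sum> \<rho>\<^sub>j\<gamma>\<^sub>j \<phi>\<^sub>j\<close> evaluated at the weighted average
  of the points \<open>(y\<^sub>j, d - C v\<^sub>j)\<close>; Fejer monotonicity and Cauchy-Schwarz bound the distance of
  that average to \<open>(z\<^sub>0, w\<^sub>0)\<close> by \<open>2 d\<^sub>0\<close> plus the weighted mean of the residuals.
\<close>

lemma nonpos_if_le_small_multiples: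
  fixes a K :: real
  assumes "\<And>t. 0 < t \<Longrightarrow> t \<le> 1 \<Longrightarrow> a \<le> t * K"
  shows "a \<le> 0"
proof (rule ccontr)
  assume "\<not> a \<le> 0"
  then have a: "a > 0" by simp
  show False
  proof (cases "K \<le> 0")
    case True
    then show False using assms[of 1] a by simp
  next
    case False
    define t where "t = a / (2 * K + a)"
    have t: "0 < t" "t \<le> 1" using a False by (auto simp: t_def)
    have "0 < K * a + a * a" using a False by (simp add: add_pos_pos)
    then have "t * K < a" using a False unfolding t_def by (simp add: field_simps)
    then show False using assms[OF t] by simp
  qed
qed

lemma prox_minimizer_subgradient:
  fixes F :: "'b::euclidean_space \<Rightarrow> ereal" and L :: "'b \<Rightarrow> 'c::euclidean_space"
  assumes prp: "proper_fun F" and cvx: "convex_fun F" and lin: "linear L"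
    and mn: "\<forall>v'. F v0 + ereal (c \<bullet> (L v0 - e) + lam / 2 * (norm (L v0 - e))\<^sup>2)
                 \<le> F v' + ereal (c \<bullet> (L v' - e) + lam / 2 * (norm (L v' - e))\<^sup>2)"
  shows "\<exists>r. F v0 = ereal r \<and> (\<forall>v. ereal (r + (- adjoint L (c + lam *\<^sub>R (L v0 - e))) \<bullet> (v - v0)) \<le> F v)"
proof -
  let ?Q = "\<lambda>v. c \<bullet> (L v - e) + lam / 2 * (norm (L v - e))\<^sup>2"
  define g0 where "g0 = c + lam *\<^sub>R (L v0 - e)"
  from prp obtain v1 where v1: "F v1 < \<infinity>" and ninf: "\<And>x. F x > -\<infinity>"
    unfolding proper_fun_def by auto
  have "F v0 + ereal (?Q v0) \<le> F v1 + ereal (?Q v1)" using mn by blast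
  with v1 ninf[of v0] obtain r where r: "F v0 = ereal r" by (cases "F v0") auto
  have "ereal (r + (- adjoint L g0) \<bullet> (v - v0)) \<le> F v" for v
  proof (cases "F v")
    case (real r1)
    define h where "h = v - v0"
    \<comment> \<open>Compare v0 with the points v0 + t h of the segment towards v, then let t tend to 0.\<close>
    have "r - r1 - g0 \<bullet> L h \<le> t * (lam / 2 * (norm (L h))\<^sup>2)" if t: "0 < t" "t \<le> 1" for t
    proof -
      have "(1 - t) *\<^sub>R (v0, r) + t *\<^sub>R (v, r1) \<in> epigraph_e F"
        using cvx r real t unfolding convex_fun_def by (intro convexD) (auto simp: epigraph_e_def)
      moreover have "(1 - t) *\<^sub>R (v0, r) + t *\<^sub>R (v, r1) = (v0 + t *\<^sub>R h, (1 - t) * r + t * r1)"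
        by (simp add: h_def algebra_simps)
      ultimately have cv: "F (v0 + t *\<^sub>R h) \<le> ereal ((1 - t) * r + t * r1)"
        by (simp add: epigraph_e_def)
      have "F v0 + ereal (?Q v0) \<le> F (v0 + t *\<^sub>R h) + ereal (?Q (v0 + t *\<^sub>R h))" using mn by blast
      also have "\<dots> \<le> ereal ((1 - t) * r + t * r1) + ereal (?Q (v0 + t *\<^sub>R h))"
        using cv by (rule add_right_mono)
      finally have "r + ?Q v0 \<le> (1 - t) * r + t * r1 + ?Q (v0 + t *\<^sub>R h)" using r by simp
      moreover have "?Q (v0 + t *\<^sub>R h) = ?Q v0 + t * (g0 \<bullet> L h) + t * t * (lam / 2 * (norm (L h))\<^sup>2)"
        using lin by (simp add: g0_def linear_add linear_scale power2_norm_eq_inner inner_simps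
            algebra_simps inner_commute)
      ultimately have "t * (r - r1 - g0 \<bullet> L h) \<le> t * (t * (lam / 2 * (norm (L h))\<^sup>2))"
        by (simp add: algebra_simps)
      then show ?thesis using t by simp
    qed
    then have "r - r1 - g0 \<bullet> L h \<le> 0" by (rule nonpos_if_le_small_multiples)
    moreover have "(- adjoint L g0) \<bullet> (v - v0) = - (g0 \<bullet> L h)"
      using adjoint_works[OF lin] by (simp add: h_def inner_commute)
    ultimately show ?thesis using real by simp
  qed (use ninf[of v] in auto)
  with r show ?thesis by (auto simp: g0_def)
qed

lemma subgradient_imp_subdiff_conj_adjoint:
  fixes F :: "'b::euclidean_space \<Rightarrow> ereal" and L :: "'b \<Rightarrow> 'c::euclidean_space"
  assumes lin: "linear L" and r: "F v0 = ereal r"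
    and sg: "\<forall>v. ereal (r + (- adjoint L z0) \<bullet> (v - v0)) \<le> F v"
  shows "e - L v0 \<in> subdiff (\<lambda>z. fconj F (- adjoint L z) + ereal (e \<bullet> z)) z0"
proof -
  have lo: "ereal (v0 \<bullet> s - r) \<le> fconj F s" for s
  proof -
    have "ereal (v0 \<bullet> s) - F v0 \<le> fconj F s" unfolding fconj_def by (rule SUP_upper) simp
    then show ?thesis using r by simp
  qed
  \<comment> \<open>The subgradient inequality says that v0 attains the supremum defining the conjugate at - L* z0.\<close>
  have up: "fconj F (- adjoint L z0) \<le> ereal (v0 \<bullet> (- adjoint L z0) - r)"
    unfolding fconj_def
  proof (rule SUP_least)
    fix x
    show "ereal (x \<bullet> - adjoint L z0) - F x \<le> ereal (v0 \<bullet> - adjoint L z0 - r)"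
    proof (cases "F x")
      case (real rx)
      have "r + (- adjoint L z0) \<bullet> (x - v0) \<le> rx" using sg[rule_format, of x] real by simp
      then show ?thesis using real by (simp add: inner_simps inner_commute)
    qed (use sg[rule_format, of x] in auto)
  qed
  have eq: "fconj F (- adjoint L z0) = ereal (v0 \<bullet> (- adjoint L z0) - r)"
    using up lo[of "- adjoint L z0"] by (rule antisym)
  show ?thesis unfolding subdiff_def
  proof (intro CollectI conjI allI)
    show "\<bar>fconj F (- adjoint L z0) + ereal (e \<bullet> z0)\<bar> \<noteq> \<infinity>" using eq by simp
    fix z'
    have "v0 \<bullet> (- adjoint L z0) - r + e \<bullet> z0 + (e - L v0) \<bullet> (z' - z0)
        = v0 \<bullet> (- adjoint L z') - r + e \<bullet> z'"
      using adjoint_works[OF lin] by (simp add: inner_simps algebra_simps)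
    with lo[of "- adjoint L z'"] show "fconj F (- adjoint L z0) + ereal (e \<bullet> z0) + ereal ((e - L v0) \<bullet> (z' - z0))
        \<le> fconj F (- adjoint L z') + ereal (e \<bullet> z')"
      using eq by (metis add_right_mono plus_ereal.simps(1))
  qed
qed

lemma subdiff_monotone:
  fixes H :: "'a::real_inner \<Rightarrow> ereal"
  assumes "a \<in> subdiff H p" "b \<in> subdiff H q"
  shows "0 \<le> (a - b) \<bullet> (p - q)"
proof -
  from assms obtain hp hq where hp: "H p = ereal hp" and hq: "H q = ereal hq"
    unfolding subdiff_def by (cases "H p"; cases "H q") auto
  have "H p + ereal (a \<bullet> (q - p)) \<le> H q" "H q + ereal (b \<bullet> (p - q)) \<le> H p"
    using assms unfolding subdiff_def by auto
  then have "hp + a \<bullet> (q - p) \<le> hq" "hq + b \<bullet> (p - q) \<le> hp" using hp hq by auto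
  then show ?thesis by (simp add: inner_simps algebra_simps)
qed

lemma linear_perturbed_minimizer_subgradient:
  fixes F :: "'b::euclidean_space \<Rightarrow> ereal" and L :: "'b \<Rightarrow> 'c::euclidean_space"
  assumes lin: "linear L" and r: "F v0 = ereal r" and ninf: "\<And>v. F v > -\<infinity>"
    and mn: "\<And>v. ereal (r + L v0 \<bullet> z) \<le> F v + ereal (L v \<bullet> z)"
  shows "\<forall>v. ereal (r + (- adjoint L z) \<bullet> (v - v0)) \<le> F v"
proof
  fix v
  show "ereal (r + (- adjoint L z) \<bullet> (v - v0)) \<le> F v"
  proof (cases "F v")
    case (real rv)
    then show ?thesis using mn[of v] adjoint_works[OF lin]
      by (simp add: inner_simps inner_commute linear_diff[OF lin])
  qed (use ninf[of v] in auto)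
qed

lemma saddle_point_in_Se:
  fixes f :: "'a::euclidean_space \<Rightarrow> ereal" and g :: "'b::euclidean_space \<Rightarrow> ereal"
    and M :: "'a \<Rightarrow> 'c::euclidean_space" and C :: "'b \<Rightarrow> 'c"
  assumes pf: "proper_fun f" and pg: "proper_fun g" and lM: "linear M" and lC: "linear C"
    and sd: "is_saddle f g M C d us vs zs"
  shows "(zs, M us) \<in> Se (\<lambda>p. fconj f (- adjoint M p)) (\<lambda>p. fconj g (- adjoint C p) + ereal (d \<bullet> p))"
proof -
  have nf: "\<And>x. f x > -\<infinity>" and ng: "\<And>x. g x > -\<infinity>"
    using pf pg unfolding proper_fun_def by auto
  have "\<bar>f us + g vs + ereal ((M us + C vs - d) \<bullet> zs)\<bar> \<noteq> \<infinity>"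
    using sd unfolding is_saddle_def lagr_def by simp
  with nf[of us] ng[of vs] obtain r1 r2 where r1: "f us = ereal r1" and r2: "g vs = ereal r2"
    by (cases "f us"; cases "g vs") auto
  let ?res = "M us + C vs - d"
  have "?res \<bullet> (zs + ?res) \<le> ?res \<bullet> zs"
    using sd r1 r2 unfolding is_saddle_def lagr_def by auto
  then have "?res \<bullet> ?res \<le> 0" by (simp add: inner_simps)
  then have "?res = 0" by (metis inner_gt_zero_iff not_le)
  then have feas: "d - C vs = M us" by (simp add: algebra_simps)
  have lmin: "\<And>u v. ereal (r1 + r2 + ?res \<bullet> zs) \<le> f u + g v + ereal ((M u + C v - d) \<bullet> zs)"
    using sd r1 r2 unfolding is_saddle_def lagr_def by auto
  have "ereal (r1 + M us \<bullet> zs) \<le> f u + ereal (M u \<bullet> zs)" for u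
    using lmin[of u vs] r2 by (cases "f u") (simp_all add: inner_simps)
  then have "0 - M us \<in> subdiff (\<lambda>p. fconj f (- adjoint M p) + ereal (0 \<bullet> p)) zs"
    using subgradient_imp_subdiff_conj_adjoint[OF lM r1
        linear_perturbed_minimizer_subgradient[of M f us r1 zs, OF lM r1 nf]] by blast
  moreover have "ereal (r2 + C vs \<bullet> zs) \<le> g v + ereal (C v \<bullet> zs)" for v
    using lmin[of us v] r1 by (cases "g v") (simp_all add: inner_simps)
  then have "d - C vs \<in> subdiff (\<lambda>p. fconj g (- adjoint C p) + ereal (d \<bullet> p)) zs"
    using subgradient_imp_subdiff_conj_adjoint[OF lC r2
        linear_perturbed_minimizer_subgradient[of C g vs r2 zs, OF lC r2 ng]] by blast
  ultimately show ?thesis using feas unfolding Se_def by (simp add: zero_ereal_def[symmetric])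
qed

lemma relaxed_projection_descent:
  fixes q p G :: "'v::real_inner"
  assumes "gam > 0" "rho > 0" "rho < 2"
  shows "2 * (rho * gam) * (G \<bullet> (q - p) - gam * (norm G)\<^sup>2)
     \<le> (norm (q - p))\<^sup>2 - (norm (q - (rho * gam) *\<^sub>R G - p))\<^sup>2"
proof -
  have "(norm (q - (rho * gam) *\<^sub>R G - p))\<^sup>2
      = (norm (q - p))\<^sup>2 - 2 * (rho * gam) * (G \<bullet> (q - p)) + (rho * gam)\<^sup>2 * (norm G)\<^sup>2"
    unfolding power2_norm_eq_inner by (simp add: inner_simps algebra_simps inner_commute power2_eq_square)
  moreover have "0 \<le> rho * gam * gam * (norm G)\<^sup>2 * (2 - rho)"
    using assms by simp
  ultimately show ?thesis by (simp add: algebra_simps power2_eq_square)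
qed

lemma relaxed_projection_telescope:
  fixes q G :: "nat \<Rightarrow> 'v::real_inner"
  assumes pos: "\<And>j. j \<ge> 1 \<Longrightarrow> gam j > 0 \<and> rho j > 0 \<and> rho j < 2"
    and step: "\<And>j. j \<ge> 1 \<Longrightarrow> q j = q (j - 1) - (rho j * gam j) *\<^sub>R G j"
  shows "2 * (\<Sum>j=1..n. rho j * gam j * (G j \<bullet> (q (j - 1) - p) - gam j * (norm (G j))\<^sup>2))
    \<le> (norm (q 0 - p))\<^sup>2 - (norm (q n - p))\<^sup>2"
proof (induction n)
  case (Suc n)
  have "2 * (rho (Suc n) * gam (Suc n)) * (G (Suc n) \<bullet> (q n - p) - gam (Suc n) * (norm (G (Suc n)))\<^sup>2)
      \<le> (norm (q n - p))\<^sup>2 - (norm (q (Suc n) - p))\<^sup>2"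
    using relaxed_projection_descent[of "gam (Suc n)" "rho (Suc n)"] pos[of "Suc n"] step[of "Suc n"]
    by simp
  with Suc.IH show ?case by (simp add: algebra_simps)
qed simp

lemma weighted_mean_square_le:
  fixes t r :: "'i \<Rightarrow> real"
  assumes "finite A" "\<And>j. j \<in> A \<Longrightarrow> 0 \<le> t j" "sum t A > 0"
  shows "((\<Sum>j\<in>A. t j * r j) / sum t A)\<^sup>2 \<le> (\<Sum>j\<in>A. t j * (r j)\<^sup>2) / sum t A"
proof -
  have "A \<noteq> {}" using assms(3) by auto
  then have "(\<Sum>j\<in>A. (t j / sum t A) * r j)\<^sup>2 \<le> (\<Sum>j\<in>A. (t j / sum t A) * (r j)\<^sup>2)"
    using convex_on_sum[OF assms(1) _ convex_power2, of "\<lambda>j. t j / sum t A" r] assms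
    by (simp add: sum_divide_distrib[symmetric])
  then show ?thesis by (simp add: sum_divide_distrib[symmetric])
qed

lemma norm_weighted_sum_le:
  fixes X :: "'i \<Rightarrow> 'v::real_normed_vector"
  assumes "\<And>j. j \<in> A \<Longrightarrow> 0 \<le> t j"
  shows "norm (\<Sum>j\<in>A. t j *\<^sub>R X j) \<le> (\<Sum>j\<in>A. t j * norm (X j))"
proof -
  have "norm (\<Sum>j\<in>A. t j *\<^sub>R X j) \<le> (\<Sum>j\<in>A. norm (t j *\<^sub>R X j))" by (rule norm_sum)
  also have "\<dots> = (\<Sum>j\<in>A. t j * norm (X j))"
    using assms by (intro sum.cong refl) simp
  finally show ?thesis .
qed

lemma norm_sub_weighted_average_sq_le:
  fixes P r :: "'i \<Rightarrow> 'v::real_normed_vector"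
  assumes A: "finite A" and t: "\<And>j. j \<in> A \<Longrightarrow> 0 \<le> t j" and Gam: "sum t A > 0"
    and fejer: "\<And>j. j \<in> A \<Longrightarrow> norm (r j - s) \<le> norm (q0 - s)"
  shows "(norm (q0 - (1 / sum t A) *\<^sub>R (\<Sum>j\<in>A. t j *\<^sub>R P j)))\<^sup>2
    \<le> 8 * (norm (q0 - s))\<^sup>2 + 2 * (\<Sum>j\<in>A. t j * (norm (P j - r j))\<^sup>2) / sum t A"
proof -
  define D where "D = norm (q0 - s)"
  define S where "S = (\<Sum>j\<in>A. t j * norm (P j - r j)) / sum t A"
  have "(1 / sum t A) *\<^sub>R (\<Sum>j\<in>A. t j *\<^sub>R P j) - s = (1 / sum t A) *\<^sub>R (\<Sum>j\<in>A. t j *\<^sub>R (P j - s))"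
    using Gam by (simp add: scaleR_diff_right sum_subtractf scaleR_sum_left[symmetric])
  then have "norm ((1 / sum t A) *\<^sub>R (\<Sum>j\<in>A. t j *\<^sub>R P j) - s)
      \<le> (\<Sum>j\<in>A. t j * norm (P j - s)) / sum t A"
    using norm_weighted_sum_le[of A t "\<lambda>j. P j - s"] t Gam by (simp add: divide_right_mono)
  also have "\<dots> \<le> (\<Sum>j\<in>A. t j * (norm (P j - r j) + D)) / sum t A"
  proof (intro divide_right_mono sum_mono mult_left_mono)
    fix j assume "j \<in> A"
    show "norm (P j - s) \<le> norm (P j - r j) + D"
      using norm_triangle_ineq[of "P j - r j" "r j - s"] fejer[OF \<open>j \<in> A\<close>] by (simp add: D_def)
  qed (use t Gam in auto)
  also have "\<dots> = S + D"
    using Gam by (simp add: S_def distrib_left sum.distrib sum_distrib_right[symmetric] add_divide_distrib)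
  finally have "norm (q0 - (1 / sum t A) *\<^sub>R (\<Sum>j\<in>A. t j *\<^sub>R P j)) \<le> 2 * D + S"
    using norm_triangle_ineq[of "q0 - s" "s - (1 / sum t A) *\<^sub>R (\<Sum>j\<in>A. t j *\<^sub>R P j)"]
    by (simp add: D_def norm_minus_commute)
  moreover have "0 \<le> S" using A t Gam by (simp add: S_def sum_nonneg)
  ultimately have "(norm (q0 - (1 / sum t A) *\<^sub>R (\<Sum>j\<in>A. t j *\<^sub>R P j)))\<^sup>2 \<le> (2 * D + S)\<^sup>2"
    by (intro power_mono) auto
  also have "\<dots> \<le> 8 * D\<^sup>2 + 2 * S\<^sup>2"
    using sum_power2_ge_zero[of "2 * D - S" 0] by (simp add: power2_eq_square algebra_simps)
  also have "S\<^sup>2 \<le> (\<Sum>j\<in>A. t j * (norm (P j - r j))\<^sup>2) / sum t A"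
    unfolding S_def using weighted_mean_square_le[OF A t Gam] .
  finally show ?thesis by (simp add: D_def)
qed

lemma le_infdist_square:
  fixes x :: "'m::metric_space"
  assumes "S \<noteq> {}" "c > 0" "\<And>s. s \<in> S \<Longrightarrow> K \<le> c * (dist x s)\<^sup>2"
  shows "K \<le> c * (infdist x S)\<^sup>2"
proof (cases "K \<le> 0")
  case False
  have "sqrt (K / c) \<le> dist x s" if "s \<in> S" for s
    using real_sqrt_le_mono[of "K / c" "(dist x s)\<^sup>2"] assms(2) assms(3)[OF that]
    by (simp add: divide_le_eq mult.commute)
  then have "sqrt (K / c) \<le> infdist x S"
    unfolding infdist_notempty[OF assms(1)] by (intro cINF_greatest assms(1))
  then have "(sqrt (K / c))\<^sup>2 \<le> (infdist x S)\<^sup>2"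
    using False assms(2) by (intro power_mono) auto
  then show ?thesis using False assms(2) by (simp add: divide_le_eq mult.commute)
next
  case True
  moreover have "0 \<le> c * (infdist x S)\<^sup>2" using assms(2) by simp
  ultimately show ?thesis by linarith
qed

lemma weighted_sum_at_weighted_averages:
  fixes x y a b :: "'i \<Rightarrow> 'v::real_inner" and t :: "'i \<Rightarrow> real"
  assumes "sum t A \<noteq> 0"
  defines "avg \<equiv> \<lambda>X. (1 / sum t A) *\<^sub>R (\<Sum>j\<in>A. t j *\<^sub>R X j)"
  shows "(\<Sum>j\<in>A. t j * ((x j - avg y) \<bullet> (b j - avg b) + (y j - avg y) \<bullet> (avg b - a j)))
       = (\<Sum>j\<in>A. t j * ((b j - avg b) \<bullet> x j + (avg a - a j) \<bullet> y j))"
proof -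
  have sums: "(\<Sum>j\<in>A. t j *\<^sub>R X j) = sum t A *\<^sub>R avg X" for X
    using assms by (simp add: avg_def)
  have "(\<Sum>j\<in>A. t j * ((x j - avg y) \<bullet> (b j - avg b) + (y j - avg y) \<bullet> (avg b - a j)))
      - (\<Sum>j\<in>A. t j * ((b j - avg b) \<bullet> x j + (avg a - a j) \<bullet> y j))
      = (\<Sum>j\<in>A. t j *\<^sub>R y j) \<bullet> avg b - avg y \<bullet> (\<Sum>j\<in>A. t j *\<^sub>R b j)
        + avg y \<bullet> (\<Sum>j\<in>A. t j *\<^sub>R a j) - avg a \<bullet> (\<Sum>j\<in>A. t j *\<^sub>R y j)"
    by (simp add: sum_subtractf[symmetric] sum.distrib[symmetric] inner_sum_left inner_sum_right
        inner_simps algebra_simps inner_commute)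
  also have "\<dots> = 0" unfolding sums by (simp add: inner_commute)
  finally show ?thesis by simp
qed

lemma norm_sq_plus_inner_pos:
  fixes p s :: "'v::real_inner"
  assumes "p \<noteq> 0 \<or> s \<noteq> 0"
  shows "0 < (norm p)\<^sup>2 + s \<bullet> (p + s)"
proof -
  have "2 * ((norm p)\<^sup>2 + s \<bullet> (p + s)) = (norm p)\<^sup>2 + (norm s)\<^sup>2 + (norm (p + s))\<^sup>2"
    by (simp add: power2_norm_eq_inner inner_simps inner_commute)
  moreover have "0 < (norm p)\<^sup>2 + (norm s)\<^sup>2"
    using assms by (auto intro: add_pos_nonneg add_nonneg_pos)
  ultimately show ?thesis by (smt (verit) zero_le_power2)
qed

locale pmm_iteration =
  fixes f :: "'a::euclidean_space \<Rightarrow> ereal" and g :: "'b::euclidean_space \<Rightarrow> ereal"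
    and M :: "'a \<Rightarrow> 'c::euclidean_space" and C :: "'b \<Rightarrow> 'c" and d :: 'c and lam :: real
    and u :: "nat \<Rightarrow> 'a" and v :: "nat \<Rightarrow> 'b" and z w :: "nat \<Rightarrow> 'c" and gam rho :: "nat \<Rightarrow> real"
  assumes f_proper: "proper_fun f" and f_convex: "convex_fun f"
    and g_proper: "proper_fun g" and g_convex: "convex_fun g"
    and linear_M: "linear M" and linear_C: "linear C"
    and lam_pos: "lam > 0"
    and rho_pos: "\<And>j. j \<ge> 1 \<Longrightarrow> 0 < rho j" and rho_less_2: "\<And>j. j \<ge> 1 \<Longrightarrow> rho j < 2"
    and v_min: "\<And>j. j \<ge> 1 \<Longrightarrow> \<forall>v'.
       g (v j) + ereal ((z (j-1) + lam *\<^sub>R w (j-1)) \<bullet> (C (v j) - d) + lam / 2 * (norm (C (v j) - d))\<^sup>2)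
       \<le> g v' + ereal ((z (j-1) + lam *\<^sub>R w (j-1)) \<bullet> (C v' - d) + lam / 2 * (norm (C v' - d))\<^sup>2)"
    and u_min: "\<And>j. j \<ge> 1 \<Longrightarrow> \<forall>u'.
       f (u j) + ereal ((z (j-1) + lam *\<^sub>R (C (v j) - d)) \<bullet> M (u j) + lam / 2 * (norm (M (u j)))\<^sup>2)
       \<le> f u' + ereal ((z (j-1) + lam *\<^sub>R (C (v j) - d)) \<bullet> M u' + lam / 2 * (norm (M u'))\<^sup>2)"
    and nostop: "\<And>j. j \<ge> 1 \<Longrightarrow> norm (M (u j) + C (v j) - d) + norm (M (u j) - w (j-1)) \<noteq> 0"
    and gam_def: "\<And>j. j \<ge> 1 \<Longrightarrow> gam j =
       (lam * (norm (C (v j) - d + w (j-1)))\<^sup>2 + lam * ((d - C (v j) - M (u j)) \<bullet> (w (j-1) - M (u j))))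
       / ((norm (M (u j) + C (v j) - d))\<^sup>2 + lam\<^sup>2 * (norm (M (u j) - w (j-1)))\<^sup>2)"
    and z_upd: "\<And>j. j \<ge> 1 \<Longrightarrow> z j = z (j-1) + (rho j * gam j) *\<^sub>R (M (u j) + C (v j) - d)"
    and w_upd: "\<And>j. j \<ge> 1 \<Longrightarrow> w j = w (j-1) - (rho j * gam j * lam) *\<^sub>R (w (j-1) - M (u j))"
begin

definition h1 :: "'c \<Rightarrow> ereal" where "h1 p = fconj f (- adjoint M p)"
definition h2 :: "'c \<Rightarrow> ereal" where "h2 p = fconj g (- adjoint C p) + ereal (d \<bullet> p)"

definition x :: "nat \<Rightarrow> 'c" where "x j = z (j-1) + lam *\<^sub>R w (j-1) + lam *\<^sub>R (C (v j) - d)"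
definition y :: "nat \<Rightarrow> 'c" where
  "y j = z (j-1) + lam *\<^sub>R w (j-1) + lam *\<^sub>R (C (v j) - d) - lam *\<^sub>R (w (j-1) - M (u j))"

definition iter :: "nat \<Rightarrow> 'c \<times> 'c" where "iter j = (z j, w j)"

definition sep_dir :: "nat \<Rightarrow> 'c \<times> 'c" where
  "sep_dir j = (d - C (v j) - M (u j), lam *\<^sub>R (w (j-1) - M (u j)))"
definition phi :: "nat \<Rightarrow> 'c \<times> 'c \<Rightarrow> real" where
  "phi j p = (x j - fst p) \<bullet> (d - C (v j) - snd p) + (y j - fst p) \<bullet> (snd p - M (u j))"

lemma norm_sep_dir_sq:
  "(norm (sep_dir j))\<^sup>2 = (norm (M (u j) + C (v j) - d))\<^sup>2 + lam\<^sup>2 * (norm (M (u j) - w (j-1)))\<^sup>2"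
proof -
  have "norm (d - C (v j) - M (u j)) = norm (M (u j) + C (v j) - d)"
    by (metis norm_minus_commute diff_diff_eq2 add_diff_eq)
  then show ?thesis
    by (simp add: sep_dir_def norm_Pair power_mult_distrib norm_minus_commute)
qed

lemma gam_mult_norm_sep_dir_sq:
  assumes "j \<ge> 1"
  shows "gam j * (norm (sep_dir j))\<^sup>2 = lam * ((norm (w (j-1) - (d - C (v j))))\<^sup>2
     + (d - C (v j) - M (u j)) \<bullet> (w (j-1) - M (u j)))"
proof -
  have "norm (M (u j) + C (v j) - d) \<noteq> 0 \<or> norm (M (u j) - w (j-1)) \<noteq> 0"
    using nostop[OF assms] by auto
  then have "(norm (sep_dir j))\<^sup>2 > 0"
    using lam_pos unfolding norm_sep_dir_sq by (auto intro: add_pos_nonneg add_nonneg_pos)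
  moreover have "lam * (norm (C (v j) - d + w (j-1)))\<^sup>2 + lam * ((d - C (v j) - M (u j)) \<bullet> (w (j-1) - M (u j)))
      = lam * ((norm (w (j-1) - (d - C (v j))))\<^sup>2 + (d - C (v j) - M (u j)) \<bullet> (w (j-1) - M (u j)))"
    by (simp add: algebra_simps)
  ultimately show ?thesis
    using gam_def[OF assms] unfolding norm_sep_dir_sq by simp
qed

lemma gam_pos:
  assumes "j \<ge> 1"
  shows "gam j > 0"
proof -
  have "w (j-1) - (d - C (v j)) \<noteq> 0 \<or> d - C (v j) - M (u j) \<noteq> 0"
    using nostop[OF assms] by (auto simp: algebra_simps)
  from norm_sq_plus_inner_pos[OF this]
  have "0 < gam j * (norm (sep_dir j))\<^sup>2"
    unfolding gam_mult_norm_sep_dir_sq[OF assms] using lam_pos by simp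
  then show ?thesis by (simp add: zero_less_mult_iff)
qed

lemma iter_step:
  assumes "j \<ge> 1"
  shows "iter j = iter (j-1) - (rho j * gam j) *\<^sub>R sep_dir j"
  using z_upd[OF assms] w_upd[OF assms] by (simp add: iter_def sep_dir_def algebra_simps)

lemma phi_eq:
  assumes "j \<ge> 1"
  shows "phi j p = sep_dir j \<bullet> (iter (j-1) - p) - gam j * (norm (sep_dir j))\<^sup>2"
proof -
  have "phi j p = (d - C (v j) - M (u j)) \<bullet> (z (j-1) - fst p) + lam * ((w (j-1) - M (u j)) \<bullet> (w (j-1) - snd p))
      - lam * ((norm (w (j-1) - (d - C (v j))))\<^sup>2 + (d - C (v j) - M (u j)) \<bullet> (w (j-1) - M (u j)))"
    unfolding phi_def x_def y_def
    by (simp add: power2_norm_eq_inner inner_simps algebra_simps inner_commute)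
  then show ?thesis
    unfolding gam_mult_norm_sep_dir_sq[OF assms] by (cases p) (simp add: sep_dir_def iter_def)
qed

lemma neg_M_u_in_subdiff_h1:
  assumes "j \<ge> 1"
  shows "- M (u j) \<in> subdiff h1 (y j)"
proof -
  have "\<forall>u'. f (u j) + ereal ((z (j-1) + lam *\<^sub>R (C (v j) - d)) \<bullet> (M (u j) - 0) + lam / 2 * (norm (M (u j) - 0))\<^sup>2)
      \<le> f u' + ereal ((z (j-1) + lam *\<^sub>R (C (v j) - d)) \<bullet> (M u' - 0) + lam / 2 * (norm (M u' - 0))\<^sup>2)"
    using u_min[OF assms] by simp
  from prox_minimizer_subgradient[OF f_proper f_convex linear_M this]
  obtain r where r: "f (u j) = ereal r"
    and sg: "\<forall>u'. ereal (r + (- adjoint M (z (j-1) + lam *\<^sub>R (C (v j) - d) + lam *\<^sub>R (M (u j) - 0)))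
                   \<bullet> (u' - u j)) \<le> f u'"
    by blast
  have "z (j-1) + lam *\<^sub>R (C (v j) - d) + lam *\<^sub>R (M (u j) - 0) = y j"
    by (simp add: y_def algebra_simps)
  with sg have "0 - M (u j) \<in> subdiff (\<lambda>p. fconj f (- adjoint M p) + ereal (0 \<bullet> p)) (y j)"
    by (intro subgradient_imp_subdiff_conj_adjoint[of M f "u j" r, OF linear_M r]) simp
  then show ?thesis by (simp add: h1_def[abs_def] zero_ereal_def[symmetric])
qed

lemma b_in_subdiff_h2:
  assumes "j \<ge> 1"
  shows "d - C (v j) \<in> subdiff h2 (x j)"
proof -
  from prox_minimizer_subgradient[OF g_proper g_convex linear_C v_min[OF assms]]
  obtain r where r: "g (v j) = ereal r"
    and sg: "\<forall>v'. ereal (r + (- adjoint C (z (j-1) + lam *\<^sub>R w (j-1) + lam *\<^sub>R (C (v j) - d)))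
                   \<bullet> (v' - v j)) \<le> g v'"
    by blast
  show ?thesis
    unfolding h2_def[abs_def] x_def by (rule subgradient_imp_subdiff_conj_adjoint[of C g "v j" r, OF linear_C r sg])
qed

lemma phi_nonneg:
  assumes "j \<ge> 1" and "s \<in> Se h1 h2"
  shows "0 \<le> phi j s"
proof -
  obtain zs ws where s: "s = (zs, ws)" by (cases s)
  have "- ws \<in> subdiff h1 zs" "ws \<in> subdiff h2 zs" using assms(2) s by (auto simp: Se_def)
  then have "0 \<le> (- M (u j) - - ws) \<bullet> (y j - zs)" "0 \<le> (d - C (v j) - ws) \<bullet> (x j - zs)"
    using subdiff_monotone[OF neg_M_u_in_subdiff_h1[OF assms(1)]]
      subdiff_monotone[OF b_in_subdiff_h2[OF assms(1)]] by blast+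
  then show ?thesis by (simp add: phi_def s inner_commute)
qed

lemma phi_telescope:
  "2 * (\<Sum>j=1..n. rho j * gam j * phi j p) \<le> (norm (iter 0 - p))\<^sup>2 - (norm (iter n - p))\<^sup>2"
proof -
  have "(\<Sum>j=1..n. rho j * gam j * phi j p)
      = (\<Sum>j=1..n. rho j * gam j * (sep_dir j \<bullet> (iter (j-1) - p) - gam j * (norm (sep_dir j))\<^sup>2))"
    by (intro sum.cong refl) (simp add: phi_eq)
  also have "2 * \<dots> \<le> (norm (iter 0 - p))\<^sup>2 - (norm (iter n - p))\<^sup>2"
    using gam_pos rho_pos rho_less_2 iter_step by (intro relaxed_projection_telescope) auto
  finally show ?thesis by simp
qed

lemma iter_fejer_monotone:
  assumes "s \<in> Se h1 h2"
  shows "norm (iter n - s) \<le> norm (iter 0 - s)"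
proof -
  have "0 \<le> (\<Sum>j=1..n. rho j * gam j * phi j s)"
  proof (intro sum_nonneg)
    fix j assume "j \<in> {1..n}"
    then have j: "j \<ge> 1" by simp
    show "0 \<le> rho j * gam j * phi j s"
      using rho_pos[OF j] gam_pos[OF j] phi_nonneg[OF j assms] by simp
  qed
  with phi_telescope[where n=n and p=s] have "(norm (iter n - s))\<^sup>2 \<le> (norm (iter 0 - s))\<^sup>2"
    by linarith
  then show ?thesis by (rule power2_le_imp_le) simp
qed

definition Gam :: "nat \<Rightarrow> real" where "Gam k = (\<Sum>j=1..k. rho j * gam j)"
definition ubar :: "nat \<Rightarrow> 'a" where "ubar k = (1 / Gam k) *\<^sub>R (\<Sum>j=1..k. (rho j * gam j) *\<^sub>R u j)"
definition vbar :: "nat \<Rightarrow> 'b" where "vbar k = (1 / Gam k) *\<^sub>R (\<Sum>j=1..k. (rho j * gam j) *\<^sub>R v j)"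

definition avg_point :: "nat \<Rightarrow> 'c \<times> 'c" where
  "avg_point k = (1 / Gam k) *\<^sub>R (\<Sum>j=1..k. (rho j * gam j) *\<^sub>R (y j, d - C (v j)))"

lemma Gam_pos:
  assumes "k \<ge> 1"
  shows "Gam k > 0"
  unfolding Gam_def using assms rho_pos gam_pos by (intro sum_pos) auto

lemma norm_point_minus_iter_sq:
  "(norm ((y j, d - C (v j)) - iter (j-1)))\<^sup>2
     = lam\<^sup>2 * (norm (M (u j) + C (v j) - d))\<^sup>2 + (norm (d - C (v j) - w (j-1)))\<^sup>2"
proof -
  have "(y j, d - C (v j)) - iter (j-1) = (lam *\<^sub>R (M (u j) + C (v j) - d), d - C (v j) - w (j-1))"
    by (simp add: y_def iter_def algebra_simps)
  then show ?thesis by (simp add: norm_Pair power_mult_distrib)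
qed

lemma ergodic_phi_bound:
  assumes k: "k \<ge> 1" and s: "s \<in> Se h1 h2"
  shows "(\<Sum>j=1..k. rho j * gam j * phi j (avg_point k))
    \<le> 4 * (norm (iter 0 - s))\<^sup>2 + (\<Sum>j=1..k. rho j * gam j * (norm ((y j, d - C (v j)) - iter (j-1)))\<^sup>2) / Gam k"
proof -
  have "2 * (\<Sum>j=1..k. rho j * gam j * phi j (avg_point k)) \<le> (norm (iter 0 - avg_point k))\<^sup>2"
    using phi_telescope[where n=k and p="avg_point k"] zero_le_power2[of "norm (iter k - avg_point k)"]
    by linarith
  also have "\<dots> \<le> 8 * (norm (iter 0 - s))\<^sup>2
      + 2 * (\<Sum>j=1..k. rho j * gam j * (norm ((y j, d - C (v j)) - iter (j-1)))\<^sup>2) / Gam k"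
    unfolding avg_point_def Gam_def
  proof (rule norm_sub_weighted_average_sq_le)
    show "0 < (\<Sum>j=1..k. rho j * gam j)" using Gam_pos[OF k] by (simp add: Gam_def)
  qed (use rho_pos gam_pos iter_fejer_monotone[OF s] in \<open>auto intro: less_imp_le\<close>)
  finally show ?thesis by simp
qed

lemma eps_sum_eq_phi_sum:
  assumes "k \<ge> 1"
  shows "(\<Sum>j=1..k. rho j * gam j * ((u j - ubar k) \<bullet> (- adjoint M (y j))))
       + (\<Sum>j=1..k. rho j * gam j * ((v j - vbar k) \<bullet> (- adjoint C (x j))))
     = (\<Sum>j=1..k. rho j * gam j * phi j (avg_point k))"
proof -
  let ?t = "\<lambda>j. rho j * gam j"
  let ?avg = "\<lambda>X. (1 / sum ?t {1..k}) *\<^sub>R (\<Sum>j=1..k. ?t j *\<^sub>R X j)"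
  have avg_a: "?avg (\<lambda>j. M (u j)) = M (ubar k)"
    by (simp add: Gam_def ubar_def linear_scale[OF linear_M] linear_sum[OF linear_M])
  have avg_b: "?avg (\<lambda>j. d - C (v j)) = d - C (vbar k)"
    using Gam_pos[OF assms] by (simp add: Gam_def vbar_def linear_scale[OF linear_C] linear_sum[OF linear_C]
        scaleR_diff_right sum_subtractf scaleR_sum_left[symmetric])
  have avg_p: "avg_point k = (?avg y, ?avg (\<lambda>j. d - C (v j)))"
    by (simp add: avg_point_def Gam_def prod_eq_iff fst_sum snd_sum)
  have "(\<Sum>j=1..k. ?t j * ((u j - ubar k) \<bullet> (- adjoint M (y j))))
       + (\<Sum>j=1..k. ?t j * ((v j - vbar k) \<bullet> (- adjoint C (x j))))
     = (\<Sum>j=1..k. ?t j * ((d - C (v j) - ?avg (\<lambda>j. d - C (v j))) \<bullet> x j + (?avg (\<lambda>j. M (u j)) - M (u j)) \<bullet> y j))"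
    unfolding avg_a avg_b sum.distrib[symmetric] distrib_left
    by (intro sum.cong refl) (simp add: adjoint_works[OF linear_M] adjoint_works[OF linear_C]
        linear_diff[OF linear_M] linear_diff[OF linear_C] inner_simps)
  also have "\<dots> = (\<Sum>j=1..k. ?t j * phi j (avg_point k))"
    unfolding avg_p phi_def fst_conv snd_conv
    using Gam_pos[OF assms] by (intro weighted_sum_at_weighted_averages[symmetric]) (simp add: Gam_def)
  finally show ?thesis .
qed

theorem ergodic_eps_bound:
  assumes k: "k \<ge> 1" and Se_ne: "Se h1 h2 \<noteq> {}"
  shows "(1 / Gam k) * (\<Sum>j=1..k. rho j * gam j * ((u j - ubar k) \<bullet> (- adjoint M (y j))))
       + (1 / Gam k) * (\<Sum>j=1..k. rho j * gam j * ((v j - vbar k) \<bullet> (- adjoint C (x j))))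
       \<le> (1 / Gam k) * ((1 / Gam k) * (\<Sum>j=1..k. rho j * gam j *
              (lam\<^sup>2 * (norm (M (u j) + C (v j) - d))\<^sup>2 + (norm (d - C (v j) - w (j-1)))\<^sup>2))
           + 4 * (infdist (iter 0) (Se h1 h2))\<^sup>2)"
proof -
  let ?R = "\<Sum>j=1..k. rho j * gam j *
              (lam\<^sup>2 * (norm (M (u j) + C (v j) - d))\<^sup>2 + (norm (d - C (v j) - w (j-1)))\<^sup>2)"
  have "(\<Sum>j=1..k. rho j * gam j * phi j (avg_point k)) - ?R / Gam k \<le> 4 * (infdist (iter 0) (Se h1 h2))\<^sup>2"
  proof (intro le_infdist_square Se_ne)
    fix s assume "s \<in> Se h1 h2"
    from ergodic_phi_bound[OF k this] show "(\<Sum>j=1..k. rho j * gam j * phi j (avg_point k)) - ?R / Gam k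
        \<le> 4 * (dist (iter 0) s)\<^sup>2"
      by (simp only: norm_point_minus_iter_sq dist_norm)
  qed simp
  then have "(1 / Gam k) * (\<Sum>j=1..k. rho j * gam j * phi j (avg_point k))
      \<le> (1 / Gam k) * ((1 / Gam k) * ?R + 4 * (infdist (iter 0) (Se h1 h2))\<^sup>2)"
    using Gam_pos[OF k] by (intro mult_left_mono) auto
  then show ?thesis
    unfolding distrib_left[symmetric] eps_sum_eq_phi_sum[OF k] .
qed

end

theorem mainTheorem7:
  fixes f :: "'a::euclidean_space \<Rightarrow> ereal" and g :: "'b::euclidean_space \<Rightarrow> ereal"
    and M :: "'a \<Rightarrow> 'c::euclidean_space" and C :: "'b \<Rightarrow> 'c" and d :: 'c
    and lam rhobar :: real
    and u :: "nat \<Rightarrow> 'a" and v :: "nat \<Rightarrow> 'b" and z w :: "nat \<Rightarrow> 'c"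
    and gam rho :: "nat \<Rightarrow> real" and k :: nat
  assumes f_pcc: "proper_fun f" "closed_fun f" "convex_fun f"
    and g_pcc: "proper_fun g" "closed_fun g" "convex_fun g"
    and lin: "linear M" "linear C"
    and A1: "\<exists>us vs zs. is_saddle f g M C d us vs zs"
    and A2: "rel_interior (effdom (fconj f)) \<inter> range (adjoint M) \<noteq> {}"
    and A3: "rel_interior (effdom (fconj g)) \<inter> range (adjoint C) \<noteq> {}"
    and lam_pos: "lam > 0" and rhobar: "0 \<le> rhobar" "rhobar < 1"
    and v_min: "\<And>j. j \<ge> 1 \<Longrightarrow> \<forall>v'.
       g (v j) + ereal ((z (j-1) + lam *\<^sub>R w (j-1)) \<bullet> (C (v j) - d) + lam / 2 * (norm (C (v j) - d))\<^sup>2)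
       \<le> g v' + ereal ((z (j-1) + lam *\<^sub>R w (j-1)) \<bullet> (C v' - d) + lam / 2 * (norm (C v' - d))\<^sup>2)"
    and u_min: "\<And>j. j \<ge> 1 \<Longrightarrow> \<forall>u'.
       f (u j) + ereal ((z (j-1) + lam *\<^sub>R (C (v j) - d)) \<bullet> M (u j) + lam / 2 * (norm (M (u j)))\<^sup>2)
       \<le> f u' + ereal ((z (j-1) + lam *\<^sub>R (C (v j) - d)) \<bullet> M u' + lam / 2 * (norm (M u'))\<^sup>2)"
    and nostop: "\<And>j. j \<ge> 1 \<Longrightarrow> norm (M (u j) + C (v j) - d) + norm (M (u j) - w (j-1)) \<noteq> 0"
    and gam_def: "\<And>j. j \<ge> 1 \<Longrightarrow> gam j =
       (lam * (norm (C (v j) - d + w (j-1)))\<^sup>2 + lam * ((d - C (v j) - M (u j)) \<bullet> (w (j-1) - M (u j))))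
       / ((norm (M (u j) + C (v j) - d))\<^sup>2 + lam\<^sup>2 * (norm (M (u j) - w (j-1)))\<^sup>2)"
    and rho_rng: "\<And>j. j \<ge> 1 \<Longrightarrow> 1 - rhobar \<le> rho j \<and> rho j \<le> 1 + rhobar"
    and z_upd: "\<And>j. j \<ge> 1 \<Longrightarrow> z j = z (j-1) + (rho j * gam j) *\<^sub>R (M (u j) + C (v j) - d)"
    and w_upd: "\<And>j. j \<ge> 1 \<Longrightarrow> w j = w (j-1) - (rho j * gam j * lam) *\<^sub>R (w (j-1) - M (u j))"
    and k_ge: "k \<ge> 1"
  defines "x \<equiv> \<lambda>j. z (j-1) + lam *\<^sub>R w (j-1) + lam *\<^sub>R (C (v j) - d)"
    and "y \<equiv> \<lambda>j. z (j-1) + lam *\<^sub>R w (j-1) + lam *\<^sub>R (C (v j) - d) - lam *\<^sub>R (w (j-1) - M (u j))"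
    and "Gam \<equiv> (\<Sum>j=1..k. rho j * gam j)"
    and "ubar \<equiv> (1 / (\<Sum>j=1..k. rho j * gam j)) *\<^sub>R (\<Sum>j=1..k. (rho j * gam j) *\<^sub>R u j)"
    and "vbar \<equiv> (1 / (\<Sum>j=1..k. rho j * gam j)) *\<^sub>R (\<Sum>j=1..k. (rho j * gam j) *\<^sub>R v j)"
    and "d0 \<equiv> infdist (z 0, w 0)
           (Se (\<lambda>p. fconj f (- adjoint M p)) (\<lambda>p. fconj g (- adjoint C p) + ereal (d \<bullet> p)))"
  shows "(1 / Gam) * (\<Sum>j=1..k. rho j * gam j * ((u j - ubar) \<bullet> (- adjoint M (y j))))
       + (1 / Gam) * (\<Sum>j=1..k. rho j * gam j * ((v j - vbar) \<bullet> (- adjoint C (x j))))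
       \<le> (1 / Gam) * ((1 / Gam) * (\<Sum>j=1..k. rho j * gam j *
              (lam\<^sup>2 * (norm (M (u j) + C (v j) - d))\<^sup>2 + (norm (d - C (v j) - w (j-1)))\<^sup>2))
           + 4 * d0\<^sup>2)"
proof -
  have "0 < rho j" "rho j < 2" if "j \<ge> 1" for j
    using rho_rng[OF that] rhobar by auto
  then interpret P: pmm_iteration f g M C d lam u v z w gam rho
    using f_pcc g_pcc lin lam_pos v_min u_min nostop gam_def z_upd w_upd
    by (intro pmm_iteration.intro) auto
  obtain us vs zs where "is_saddle f g M C d us vs zs" using A1 by blast
  from saddle_point_in_Se[OF f_pcc(1) g_pcc(1) lin this]
  have "Se P.h1 P.h2 \<noteq> {}" unfolding P.h1_def[abs_def] P.h2_def[abs_def] by blast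
  moreover have "x = P.x" "y = P.y"
    using assms(23,24) by (simp_all add: fun_eq_iff P.x_def P.y_def)
  moreover have "Gam = P.Gam k" "ubar = P.ubar k" "vbar = P.vbar k"
    using assms(25-27) by (simp_all add: P.Gam_def P.ubar_def P.vbar_def)
  moreover have "d0 = infdist (P.iter 0) (Se P.h1 P.h2)"
    using assms(28) by (simp add: P.iter_def P.h1_def[abs_def] P.h2_def[abs_def])
  ultimately show ?thesis using P.ergodic_eps_bound[OF k_ge] by simp
qed

end
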